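(* Let $\Omega\subset\mathbb{R}^N$ be a bounded open set and let $p,q:\Omega\to[1,\infty)$ be measurable with $q(x)\le p(x)\le p_+<\infty$ for all $x\in\Omega$. Assume that for every sequence $\{E_n\}_{n\in\mathbb{N}}$ of measurable subsets of $\Omega$ with $|E_n|\to0$ we have $\|\chi_{E_n}\|_{r'(\cdot)}\to 0$. Then $L^{p(\cdot)}(\Omega)$ is almost-compactly embedded in $L^{q(\cdot)}(\Omega)$.
   Context: $|E|$ denotes Lebesgue measure and $\chi_E$ the characteristic function of $E$. For measurable $e:\Omega\to[1,\infty)$, $\|u\|_{e(\cdot)}=\inf\{\lambda>0:\int_\Omega|u(x)/\lambda|^{e(x)}dx\le1\}$ and $L^{e(\cdot)}(\Omega)=\{u \text{ measurable}:\|u\|_{e(\cdot)}<\infty\}$. Here $r(x)=p(x)/q(x)$ and $r'(x)=r(x)/(r(x)-1)=p(x)/(p(x)-q(x))\in(1,\infty]$, with $r'(x)=\infty$ where $p(x)=q(x)$; for this possibly unbounded exponent, $\|v\|_{r'(\cdot)}=\inf\{\lambda>0:\int_{\{r'<\infty\}}|v/\lambda|^{r'(x)}dx+\operatorname{ess\,sup}_{\{r'=\infty\}}|v/\lambda|\le1\}$. Almost-compact embedding: for Banach function spaces $X,Y$ on $\Omega$, $X$ is almost-compactly embedded in $Y$ if for every sequence $\{E_n\}$ of measurable subsets of $\Omega$ with $\chi_{E_n}\to0$ pointwise a.e. in $\Omega$ one has $\lim_{n\to\infty}\sup_{\|u\|_X\le1}\|u\chi_{E_n}\|_Y=0$. 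*)

theory Defs
  imports "HOL-Analysis.Analysis"
begin

definition var_modular :: "'a::euclidean_space set \<Rightarrow> ('a \<Rightarrow> real) \<Rightarrow> ('a \<Rightarrow> real) \<Rightarrow> ennreal" where
  "var_modular \<Omega> e u = (\<integral>\<^sup>+ x \<in> \<Omega>. ennreal (\<bar>u x\<bar> powr e x) \<partial>lebesgue)"

definition var_norm :: "'a::euclidean_space set \<Rightarrow> ('a \<Rightarrow> real) \<Rightarrow> ('a \<Rightarrow> real) \<Rightarrow> ennreal" where
  "var_norm \<Omega> e u = Inf {ennreal l | l. l > 0 \<and> var_modular \<Omega> e (\<lambda>x. u x / l) \<le> 1}"

definition var_Lp :: "'a::euclidean_space set \<Rightarrow> ('a \<Rightarrow> real) \<Rightarrow> ('a \<Rightarrow> real) set" where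
  "var_Lp \<Omega> e = {u. u \<in> borel_measurable (lebesgue_on \<Omega>) \<and> var_norm \<Omega> e u < \<infinity>}"

text \<open>Essential supremum of |v| over S (w.r.t. Lebesgue measure); equals 0 if S is null.\<close>
definition ess_sup_abs :: "'a::euclidean_space set \<Rightarrow> ('a \<Rightarrow> real) \<Rightarrow> ennreal" where
  "ess_sup_abs S v = Inf {c. AE x in lebesgue. x \<in> S \<longrightarrow> ennreal \<bar>v x\<bar> \<le> c}"

definition var_modular_inf :: "'a::euclidean_space set \<Rightarrow> ('a \<Rightarrow> ereal) \<Rightarrow> ('a \<Rightarrow> real) \<Rightarrow> ennreal" where
  "var_modular_inf \<Omega> e v =
     (\<integral>\<^sup>+ x \<in> {x \<in> \<Omega>. e x < \<infinity>}. ennreal (\<bar>v x\<bar> powr real_of_ereal (e x)) \<partial>lebesgue)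
     + ess_sup_abs {x \<in> \<Omega>. e x = \<infinity>} v"

definition var_norm_inf :: "'a::euclidean_space set \<Rightarrow> ('a \<Rightarrow> ereal) \<Rightarrow> ('a \<Rightarrow> real) \<Rightarrow> ennreal" where
  "var_norm_inf \<Omega> e v = Inf {ennreal l | l. l > 0 \<and> var_modular_inf \<Omega> e (\<lambda>x. v x / l) \<le> 1}"

text \<open>r'(x) = p(x)/(p(x)-q(x)), = oo where p(x)=q(x).\<close>
definition conj_ratio_exp :: "('a \<Rightarrow> real) \<Rightarrow> ('a \<Rightarrow> real) \<Rightarrow> 'a \<Rightarrow> ereal" where
  "conj_ratio_exp p q x = (if p x = q x then \<infinity> else ereal (p x / (p x - q x)))"

definition almost_compact_embedding ::
  "'a::euclidean_space set \<Rightarrow> ('a \<Rightarrow> real) \<Rightarrow> ('a \<Rightarrow> real) \<Rightarrow> bool" where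
  "almost_compact_embedding \<Omega> p q \<longleftrightarrow>
     (\<forall>E :: nat \<Rightarrow> 'a set.
        (\<forall>n. E n \<in> sets lebesgue \<and> E n \<subseteq> \<Omega>) \<and>
        (AE x in lebesgue. x \<in> \<Omega> \<longrightarrow> (\<lambda>n. indicator (E n) x :: real) \<longlonglongrightarrow> 0)
        \<longrightarrow> (\<lambda>n. SUP u \<in> {u \<in> var_Lp \<Omega> p. var_norm \<Omega> p u \<le> 1}.
                   var_norm \<Omega> q (\<lambda>x. u x * indicator (E n) x)) \<longlonglongrightarrow> 0)"

end

theory Submission
  imports Defs
begin

text \<open>Take u with p-norm at most 1 and E whose indicator has r'-modular at most 1 at level k.
  Where p > q, Young's inequality with the conjugate exponents p/q and r' gives
  \<open>|u|\<^sup>q \<le> \<surd>k |u|\<^sup>p + \<surd>k (1/k)\<^sup>r\<^sup>'\<close>, and both terms integrate over E to at most \<open>\<surd>k\<close> by the two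
  modular bounds; where p = q the exponent r' is infinite, and the essential-supremum part of
  the r'-modular forces E to be null there. So the q-modular of \<open>u \<chi>\<^sub>E\<close> is at most \<open>2\<surd>k\<close> uniformly
  in u, and as q is bounded this makes the q-norm of \<open>u \<chi>\<^sub>E\<close> uniformly small. Finally, on the
  finite-measure set \<Omega>, a.e. convergence of the indicators of \<open>E\<^sub>n\<close> to 0 gives \<open>|E\<^sub>n| \<rightarrow> 0\<close> by
  dominated convergence.\<close>

lemma powr_le_Young_split:
  fixes A p q k :: real
  assumes A: "0 \<le> A" and q1: "1 \<le> q" and qp: "q < p" and k0: "0 < k" and k1: "k < 1"
  shows "A powr q \<le> sqrt k * A powr p + sqrt k * (1/k) powr (p/(p-q))"
proof -
  \<comment> \<open>Young's inequality for the product \<open>(A\<^sup>q/t) t\<close> with \<open>t = 1/\<surd>k\<close> and exponents p/q, p/(p-q).\<close>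
  define t where "t = 1 / sqrt k"
  define r where "r = p/q"
  define s where "s = p/(p-q)"
  have t1: "1 \<le> t" using k0 k1 by (simp add: t_def le_divide_eq)
  have t0: "0 < t" using t1 by simp
  have r1: "1 < r" and s1: "1 < s" and rs: "1/r + 1/s = 1"
    using q1 qp by (simp_all add: r_def s_def field_simps)
  have "A powr q = (A powr q / t) * t" using t0 by simp
  also have "\<dots> \<le> (A powr q / t) powr r / r + t powr s / s"
    by (rule Youngs_inequality[OF r1 s1 rs]) (use t0 in simp_all)
  also have "\<dots> \<le> (A powr q / t) powr r + t powr s"
    using r1 s1 by (intro add_mono) (simp_all add: divide_le_eq mult_le_cancel_left1)
  finally have Young: "A powr q \<le> (A powr q / t) powr r + t powr s" .
  have "(A powr q / t) powr r = A powr p / t powr r"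
    using A t0 q1 by (simp add: powr_divide powr_powr r_def)
  also have "\<dots> \<le> A powr p / t"
    using t1 r1 t0 by (intro divide_left_mono) (auto intro: order_trans[OF _ powr_mono[of 1 r]])
  finally have first: "(A powr q / t) powr r \<le> sqrt k * A powr p"
    by (simp add: t_def mult.commute)
  have t_eq: "t = sqrt k * (1/k)"
    using k0 by (simp add: t_def field_simps)
  have "t powr s = (sqrt k * (1/k)) powr s"
    by (simp only: t_eq)
  also have "\<dots> = sqrt k powr s * (1/k) powr s"
    using k0 by (intro powr_mult)
  also have "\<dots> \<le> sqrt k * (1/k) powr s"
    using k0 k1 s1 powr_mono'[of 1 s "sqrt k"] by (intro mult_right_mono) auto
  finally have second: "t powr s \<le> sqrt k * (1/k) powr s" .
  show ?thesis
    using Young first second by (simp add: s_def)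
qed

lemma var_modular_eq_nn_integral_restrict:
  assumes "\<Omega> \<in> sets lebesgue"
  shows "var_modular \<Omega> e u = (\<integral>\<^sup>+x. ennreal (\<bar>u x\<bar> powr e x) \<partial>lebesgue_on \<Omega>)"
  using assms unfolding var_modular_def by (simp add: nn_integral_restrict_space)

lemma var_norm_le_of_var_modular_le:
  assumes "0 < l" and "var_modular \<Omega> e (\<lambda>x. u x / l) \<le> 1"
  shows "var_norm \<Omega> e u \<le> ennreal l"
  unfolding var_norm_def using assms by (intro Inf_lower) auto

lemma var_norm_less_imp_var_modular_le:
  assumes "var_norm \<Omega> e u < ennreal c"
  obtains l where "0 < l" "l < c" "var_modular \<Omega> e (\<lambda>x. u x / l) \<le> 1"
  using assms unfolding var_norm_def by (auto simp: Inf_less_iff ennreal_less_iff)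

lemma var_norm_inf_less_imp_var_modular_inf_le:
  assumes "var_norm_inf \<Omega> e v < ennreal c"
  obtains k where "0 < k" "k < c" "var_modular_inf \<Omega> e (\<lambda>x. v x / k) \<le> 1"
  using assms unfolding var_norm_inf_def by (auto simp: Inf_less_iff ennreal_less_iff)

lemma var_modular_inf_le_oneD:
  assumes "var_modular_inf \<Omega> e v \<le> 1"
  shows "(\<integral>\<^sup>+ x \<in> {x \<in> \<Omega>. e x < \<infinity>}. ennreal (\<bar>v x\<bar> powr real_of_ereal (e x)) \<partial>lebesgue) \<le> 1"
    and "ess_sup_abs {x \<in> \<Omega>. e x = \<infinity>} v \<le> 1"
  using order_trans[OF add_increasing2[OF zero_le order_refl] assms[unfolded var_modular_inf_def]]
    order_trans[OF add_increasing[OF zero_le order_refl] assms[unfolded var_modular_inf_def]]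
  by simp_all

lemma AE_less_of_ess_sup_abs_less:
  assumes "ess_sup_abs S v < c"
  shows "AE x in lebesgue. x \<in> S \<longrightarrow> ennreal \<bar>v x\<bar> < c"
proof -
  obtain c' where "AE x in lebesgue. x \<in> S \<longrightarrow> ennreal \<bar>v x\<bar> \<le> c'" and "c' < c"
    using assms unfolding ess_sup_abs_def by (auto simp: Inf_less_iff)
  then show ?thesis by (auto elim: eventually_mono)
qed

lemma AE_notin_where_exponents_agree:
  assumes \<Omega>: "\<Omega> \<in> sets lebesgue" and k0: "0 < k" and k1: "k < 1"
    and modE: "var_modular_inf \<Omega> (conj_ratio_exp p q) (\<lambda>x. indicator E x / k) \<le> 1"
  shows "AE x in lebesgue_on \<Omega>. p x = q x \<longrightarrow> x \<notin> E"
proof -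
  have "(1::ennreal) < ennreal (1/k)"
    using k0 k1 by simp
  then have "ess_sup_abs {x \<in> \<Omega>. conj_ratio_exp p q x = \<infinity>} (\<lambda>x. indicator E x / k) < ennreal (1/k)"
    using var_modular_inf_le_oneD(2)[OF modE] by (rule le_less_trans[rotated])
  then have "AE x in lebesgue. x \<in> \<Omega> \<and> p x = q x \<longrightarrow> ennreal \<bar>indicator E x / k\<bar> < ennreal (1/k)"
    by (auto simp: conj_ratio_exp_def dest!: AE_less_of_ess_sup_abs_less)
  then show ?thesis
    using \<Omega> k0 by (auto simp: AE_restrict_space_iff indicator_def elim!: eventually_mono)
qed

lemma nn_integral_indicator_conj_exponent_le:
  assumes \<Omega>: "\<Omega> \<in> sets lebesgue" and k0: "0 < k"
    and modE: "var_modular_inf \<Omega> (conj_ratio_exp p q) (\<lambda>x. indicator E x / k) \<le> 1"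
  shows "(\<integral>\<^sup>+x. ennreal (indicator E x * (if p x = q x then 0 else (1/k) powr (p x / (p x - q x))))
           \<partial>lebesgue_on \<Omega>) \<le> 1"
proof -
  have "(\<integral>\<^sup>+x. ennreal (indicator E x * (if p x = q x then 0 else (1/k) powr (p x / (p x - q x))))
           \<partial>lebesgue_on \<Omega>)
      = (\<integral>\<^sup>+ x \<in> {x \<in> \<Omega>. conj_ratio_exp p q x < \<infinity>}.
           ennreal (\<bar>indicator E x / k\<bar> powr real_of_ereal (conj_ratio_exp p q x)) \<partial>lebesgue)"
    using \<Omega> k0 unfolding nn_integral_restrict_space[of \<Omega> lebesgue, simplified, OF \<Omega>]
    by (intro nn_integral_cong) (auto simp: conj_ratio_exp_def indicator_def)
  with var_modular_inf_le_oneD(1)[OF modE] show ?thesis by simp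
qed

lemma var_modular_mult_indicator_le_sqrt:
  fixes \<Omega> :: "'a::euclidean_space set" and p q v :: "'a \<Rightarrow> real"
  assumes \<Omega>: "\<Omega> \<in> sets lebesgue"
    and pm: "p \<in> borel_measurable (lebesgue_on \<Omega>)" and qm: "q \<in> borel_measurable (lebesgue_on \<Omega>)"
    and vm: "v \<in> borel_measurable (lebesgue_on \<Omega>)"
    and pq: "\<forall>x\<in>\<Omega>. 1 \<le> q x \<and> q x \<le> p x"
    and E: "E \<in> sets lebesgue" "E \<subseteq> \<Omega>"
    and mod_v: "var_modular \<Omega> p v \<le> 1"
    and k0: "0 < k" and k1: "k < 1"
    and modE: "var_modular_inf \<Omega> (conj_ratio_exp p q) (\<lambda>x. indicator E x / k) \<le> 1"
  shows "var_modular \<Omega> q (\<lambda>x. v x * indicator E x) \<le> ennreal (2 * sqrt k)"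
proof -
  let ?M = "lebesgue_on \<Omega>"
  define g where "g x = indicator E x * (if p x = q x then 0 else (1/k) powr (p x / (p x - q x)))" for x
  have gm: "g \<in> borel_measurable ?M"
    unfolding g_def using pm qm measurable_restrict_space1[OF borel_measurable_indicator[OF E(1)]]
    by measurable
  have "AE x in ?M. ennreal (\<bar>v x * indicator E x\<bar> powr q x)
      \<le> ennreal (sqrt k) * ennreal (\<bar>v x\<bar> powr p x) + ennreal (sqrt k) * ennreal (g x)"
    using AE_notin_where_exponents_agree[OF \<Omega> k0 k1 modE] AE_space
  proof eventually_elim
    case (elim x)
    show ?case
    proof (cases "x \<in> E")
      case True
      with elim E pq have x: "1 \<le> q x" "q x < p x" by force+
      have g_nonneg: "0 \<le> g x"
        by (simp add: g_def)
      have "\<bar>v x\<bar> powr q x \<le> sqrt k * \<bar>v x\<bar> powr p x + sqrt k * g x"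
        using powr_le_Young_split[OF abs_ge_zero x k0 k1] True x by (simp add: g_def)
      then have "ennreal (\<bar>v x * indicator E x\<bar> powr q x) \<le> ennreal (sqrt k * \<bar>v x\<bar> powr p x + sqrt k * g x)"
        using True by (intro ennreal_leI) simp
      also have "\<dots> = ennreal (sqrt k) * ennreal (\<bar>v x\<bar> powr p x) + ennreal (sqrt k) * ennreal (g x)"
        using g_nonneg k0 by (subst ennreal_plus) (simp_all add: ennreal_mult)
      finally show ?thesis .
    qed simp
  qed
  then have "var_modular \<Omega> q (\<lambda>x. v x * indicator E x)
      \<le> (\<integral>\<^sup>+x. ennreal (sqrt k) * ennreal (\<bar>v x\<bar> powr p x) + ennreal (sqrt k) * ennreal (g x) \<partial>?M)"
    unfolding var_modular_eq_nn_integral_restrict[OF \<Omega>] by (rule nn_integral_mono_AE)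
  also have "\<dots> = ennreal (sqrt k) * var_modular \<Omega> p v + ennreal (sqrt k) * (\<integral>\<^sup>+x. ennreal (g x) \<partial>?M)"
    using pm vm gm by (simp add: var_modular_eq_nn_integral_restrict[OF \<Omega>] nn_integral_add nn_integral_cmult)
  also have "\<dots> \<le> ennreal (sqrt k) * 1 + ennreal (sqrt k) * 1"
    using mod_v nn_integral_indicator_conj_exponent_le[OF \<Omega> k0 modE]
    by (intro add_mono mult_left_mono) (auto simp: g_def)
  also have "\<dots> = ennreal (2 * sqrt k)"
    using k0 by (simp flip: ennreal_plus)
  finally show ?thesis .
qed

lemma var_modular_rescale_le:
  assumes \<Omega>: "\<Omega> \<in> sets lebesgue"
    and qm: "q \<in> borel_measurable (lebesgue_on \<Omega>)" and vm: "v \<in> borel_measurable (lebesgue_on \<Omega>)"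
    and qP: "\<forall>x\<in>\<Omega>. 0 \<le> q x \<and> q x \<le> P"
    and l: "0 < l" "l \<le> c" and \<epsilon>: "0 < \<epsilon>" "\<epsilon> \<le> c"
  shows "var_modular \<Omega> q (\<lambda>x. v x / \<epsilon>) \<le> ennreal ((c / \<epsilon>) powr P) * var_modular \<Omega> q (\<lambda>x. v x / l)"
proof -
  have pointwise: "\<bar>v x / \<epsilon>\<bar> powr q x \<le> (c / \<epsilon>) powr P * \<bar>v x / l\<bar> powr q x" if "x \<in> \<Omega>" for x
  proof -
    have "\<bar>v x / \<epsilon>\<bar> = (l / \<epsilon>) * \<bar>v x / l\<bar>"
      using l \<epsilon> by (simp add: abs_divide)
    then have "\<bar>v x / \<epsilon>\<bar> powr q x = (l / \<epsilon>) powr q x * \<bar>v x / l\<bar> powr q x"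
      using l \<epsilon> powr_mult[of "l / \<epsilon>" "\<bar>v x / l\<bar>" "q x"] by simp
    also have "(l / \<epsilon>) powr q x \<le> (c / \<epsilon>) powr q x"
      using l \<epsilon> qP that by (intro powr_mono2) (auto intro: divide_right_mono)
    also have "\<dots> \<le> (c / \<epsilon>) powr P"
      using \<epsilon> qP that by (intro powr_mono) auto
    finally show ?thesis
      by (simp add: mult_right_mono)
  qed
  have "var_modular \<Omega> q (\<lambda>x. v x / \<epsilon>)
      \<le> (\<integral>\<^sup>+x. ennreal ((c / \<epsilon>) powr P) * ennreal (\<bar>v x / l\<bar> powr q x) \<partial>lebesgue_on \<Omega>)"
    unfolding var_modular_eq_nn_integral_restrict[OF \<Omega>]
  proof (intro nn_integral_mono)
    fix x assume "x \<in> space (lebesgue_on \<Omega>)"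
    then have "ennreal (\<bar>v x / \<epsilon>\<bar> powr q x) \<le> ennreal ((c / \<epsilon>) powr P * \<bar>v x / l\<bar> powr q x)"
      using pointwise by (intro ennreal_leI) simp
    moreover have "ennreal ((c / \<epsilon>) powr P * \<bar>v x / l\<bar> powr q x)
        = ennreal ((c / \<epsilon>) powr P) * ennreal (\<bar>v x / l\<bar> powr q x)"
      by (intro ennreal_mult) simp_all
    ultimately show "ennreal (\<bar>v x / \<epsilon>\<bar> powr q x) \<le> ennreal ((c / \<epsilon>) powr P) * ennreal (\<bar>v x / l\<bar> powr q x)"
      by (rule ord_le_eq_trans)
  qed
  also have "\<dots> = ennreal ((c / \<epsilon>) powr P) * var_modular \<Omega> q (\<lambda>x. v x / l)"
    using qm vm by (simp add: var_modular_eq_nn_integral_restrict[OF \<Omega>] nn_integral_cmult)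
  finally show ?thesis .
qed

lemma var_norm_mult_indicator_le:
  fixes \<Omega> :: "'a::euclidean_space set" and p q u :: "'a \<Rightarrow> real"
  assumes \<Omega>: "\<Omega> \<in> sets lebesgue"
    and pm: "p \<in> borel_measurable (lebesgue_on \<Omega>)" and qm: "q \<in> borel_measurable (lebesgue_on \<Omega>)"
    and um: "u \<in> borel_measurable (lebesgue_on \<Omega>)"
    and pqP: "\<forall>x\<in>\<Omega>. 1 \<le> q x \<and> q x \<le> p x \<and> p x \<le> P" and P: "0 \<le> P"
    and E: "E \<in> sets lebesgue" "E \<subseteq> \<Omega>"
    and u1: "var_norm \<Omega> p u \<le> 1"
    and \<epsilon>: "0 < \<epsilon>" "\<epsilon> \<le> 2"
    and normE: "var_norm_inf \<Omega> (conj_ratio_exp p q) (indicator E) < ennreal (((\<epsilon> / 2) powr P / 2)\<^sup>2)"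
  shows "var_norm \<Omega> q (\<lambda>x. u x * indicator E x) \<le> ennreal \<epsilon>"
proof -
  \<comment> \<open>The threshold makes the rescaling factor \<open>(2/\<epsilon>)\<^sup>P\<close> times the modular bound \<open>2\<surd>k\<close> at most 1.\<close>
  define a where "a = (\<epsilon> / 2) powr P"
  have a0: "0 < a" and a1: "a \<le> 1"
    using \<epsilon> P by (auto simp: a_def intro: powr_le1)
  have "var_norm \<Omega> p u < ennreal 2"
    using u1 by (simp add: le_less_trans)
  then obtain l where l: "0 < l" "l < 2" and mod_u: "var_modular \<Omega> p (\<lambda>x. u x / l) \<le> 1"
    by (rule var_norm_less_imp_var_modular_le)
  obtain k where k0: "0 < k" and ka: "k < (a / 2)\<^sup>2"
    and modE: "var_modular_inf \<Omega> (conj_ratio_exp p q) (\<lambda>x. indicator E x / k) \<le> 1"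
    using normE unfolding a_def by (rule var_norm_inf_less_imp_var_modular_inf_le)
  have sqrt_k: "sqrt k < a / 2"
    using ka a0 real_sqrt_less_iff[of k "(a / 2)\<^sup>2"] by simp
  have k1: "k < 1"
    using ka a0 a1 power_le_one[of "a / 2" 2] by simp
  have uEm: "(\<lambda>x. u x * indicator E x) \<in> borel_measurable (lebesgue_on \<Omega>)"
    using um measurable_restrict_space1[OF borel_measurable_indicator[OF E(1)]] by measurable
  have qP: "\<forall>x\<in>\<Omega>. 0 \<le> q x \<and> q x \<le> P"
    using pqP by fastforce
  have rescale: "var_modular \<Omega> q (\<lambda>x. u x * indicator E x / \<epsilon>)
      \<le> ennreal ((2 / \<epsilon>) powr P) * var_modular \<Omega> q (\<lambda>x. u x * indicator E x / l)"
    using var_modular_rescale_le[OF \<Omega> qm uEm qP l(1) _ \<epsilon>] l(2) by simp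
  have "var_modular \<Omega> q (\<lambda>x. u x / l * indicator E x) \<le> ennreal (2 * sqrt k)"
    using pqP um by (intro var_modular_mult_indicator_le_sqrt[OF \<Omega> pm qm _ _ E mod_u k0 k1 modE]) auto
  then have restrict: "var_modular \<Omega> q (\<lambda>x. u x * indicator E x / l) \<le> ennreal (2 * sqrt k)"
    by (simp add: field_simps)
  have "(2 / \<epsilon>) powr P * (2 * sqrt k) \<le> (2 / \<epsilon>) powr P * a"
    using sqrt_k by (intro mult_left_mono) auto
  also have "(2 / \<epsilon>) powr P * a = 1"
    using \<epsilon> by (simp add: a_def powr_mult[symmetric])
  finally have const: "(2 / \<epsilon>) powr P * (2 * sqrt k) \<le> 1" .
  have "var_modular \<Omega> q (\<lambda>x. u x * indicator E x / \<epsilon>) \<le> ennreal ((2 / \<epsilon>) powr P) * ennreal (2 * sqrt k)"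
    by (rule order_trans[OF rescale mult_left_mono[OF restrict]]) simp
  also have "\<dots> = ennreal ((2 / \<epsilon>) powr P * (2 * sqrt k))"
    using k0 by (simp add: ennreal_mult)
  also have "\<dots> \<le> 1"
    using const by simp
  finally show ?thesis
    using \<epsilon>(1) by (rule var_norm_le_of_var_modular_le[rotated])
qed

lemma measure_tendsto_0_if_AE_indicator_tendsto_0:
  fixes \<Omega> :: "'a::euclidean_space set" and E :: "nat \<Rightarrow> 'a set"
  assumes \<Omega>: "\<Omega> \<in> lmeasurable"
    and E: "\<And>n. E n \<in> sets lebesgue" "\<And>n. E n \<subseteq> \<Omega>"
    and lim: "AE x in lebesgue. x \<in> \<Omega> \<longrightarrow> (\<lambda>n. indicator (E n) x :: real) \<longlonglongrightarrow> 0"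
  shows "(\<lambda>n. measure lebesgue (E n)) \<longlonglongrightarrow> 0"
proof -
  have "(\<lambda>n. integral\<^sup>L lebesgue (indicator (E n) :: 'a \<Rightarrow> real)) \<longlonglongrightarrow> integral\<^sup>L lebesgue (\<lambda>x::'a. 0 :: real)"
  proof (rule integral_dominated_convergence[where w = "indicator \<Omega>"])
    show "integrable lebesgue (indicator \<Omega> :: 'a \<Rightarrow> real)"
      using \<Omega> by (intro integrable_real_indicator) (auto simp: fmeasurable_def)
    have "x \<notin> \<Omega> \<Longrightarrow> (\<lambda>n. indicator (E n) x :: real) = (\<lambda>n. 0)" for x
      using E(2) by (force simp: indicator_def)
    then show "AE x in lebesgue. (\<lambda>n. indicator (E n) x :: real) \<longlonglongrightarrow> 0"
      using lim by (auto elim!: eventually_mono)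
    show "AE x in lebesgue. norm (indicator (E n) x :: real) \<le> indicator \<Omega> x" for n
      using E(2) by (auto simp: indicator_def)
  qed (use E(1) in simp_all)
  then show ?thesis
    by (simp add: E(1))
qed

lemma SUP_var_norm_mult_indicator_tendsto_0:
  fixes \<Omega> :: "'a::euclidean_space set" and p q :: "'a \<Rightarrow> real" and E :: "nat \<Rightarrow> 'a set"
  assumes \<Omega>: "\<Omega> \<in> sets lebesgue"
    and pm: "p \<in> borel_measurable (lebesgue_on \<Omega>)" and qm: "q \<in> borel_measurable (lebesgue_on \<Omega>)"
    and pqP: "\<forall>x\<in>\<Omega>. 1 \<le> q x \<and> q x \<le> p x \<and> p x \<le> P" and P: "0 \<le> P"
    and E: "\<And>n. E n \<in> sets lebesgue" "\<And>n. E n \<subseteq> \<Omega>"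
    and normE: "(\<lambda>n. var_norm_inf \<Omega> (conj_ratio_exp p q) (indicator (E n))) \<longlonglongrightarrow> 0"
  shows "(\<lambda>n. SUP u \<in> {u \<in> var_Lp \<Omega> p. var_norm \<Omega> p u \<le> 1}.
           var_norm \<Omega> q (\<lambda>x. u x * indicator (E n) x)) \<longlonglongrightarrow> 0"
proof (rule tendsto_zero_ennreal)
  fix r :: real
  assume "0 < r"
  define \<epsilon> where "\<epsilon> = min (r / 2) 1"
  have \<epsilon>: "0 < \<epsilon>" "\<epsilon> \<le> 2" "\<epsilon> < r"
    using \<open>0 < r\<close> by (auto simp: \<epsilon>_def)
  have "\<forall>\<^sub>F n in sequentially.
      var_norm_inf \<Omega> (conj_ratio_exp p q) (indicator (E n)) < ennreal (((\<epsilon> / 2) powr P / 2)\<^sup>2)"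
    using order_tendstoD(2)[OF normE] \<epsilon> by simp
  then show "\<forall>\<^sub>F n in sequentially. (SUP u \<in> {u \<in> var_Lp \<Omega> p. var_norm \<Omega> p u \<le> 1}.
      var_norm \<Omega> q (\<lambda>x. u x * indicator (E n) x)) < ennreal r"
  proof (rule eventually_mono)
    fix n
    assume "var_norm_inf \<Omega> (conj_ratio_exp p q) (indicator (E n)) < ennreal (((\<epsilon> / 2) powr P / 2)\<^sup>2)"
    then have "(SUP u \<in> {u \<in> var_Lp \<Omega> p. var_norm \<Omega> p u \<le> 1}.
        var_norm \<Omega> q (\<lambda>x. u x * indicator (E n) x)) \<le> ennreal \<epsilon>"
      using var_norm_mult_indicator_le[OF \<Omega> pm qm _ pqP P E(1,2)[of n] _ \<epsilon>(1,2)]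
      by (auto simp: var_Lp_def intro!: SUP_least)
    also have "\<dots> < ennreal r"
      using \<epsilon> by (simp add: ennreal_less_iff)
    finally show "(SUP u \<in> {u \<in> var_Lp \<Omega> p. var_norm \<Omega> p u \<le> 1}.
        var_norm \<Omega> q (\<lambda>x. u x * indicator (E n) x)) < ennreal r" .
  qed
qed

theorem lemma3p3:
  fixes \<Omega> :: "'a::euclidean_space set" and p q :: "'a \<Rightarrow> real" and p_plus :: real
  assumes "open \<Omega>" and "bounded \<Omega>"
    and "p \<in> borel_measurable (lebesgue_on \<Omega>)" and "q \<in> borel_measurable (lebesgue_on \<Omega>)"
    and "\<forall>x\<in>\<Omega>. 1 \<le> q x \<and> q x \<le> p x \<and> p x \<le> p_plus"
    and "\<forall>E :: nat \<Rightarrow> 'a set.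
           (\<forall>n. E n \<in> sets lebesgue \<and> E n \<subseteq> \<Omega>) \<and> (\<lambda>n. measure lebesgue (E n)) \<longlonglongrightarrow> 0
           \<longrightarrow> (\<lambda>n. var_norm_inf \<Omega> (conj_ratio_exp p q) (indicator (E n))) \<longlonglongrightarrow> 0"
  shows "almost_compact_embedding \<Omega> p q"
  unfolding almost_compact_embedding_def
proof (intro allI impI)
  fix E :: "nat \<Rightarrow> 'a set"
  assume "(\<forall>n. E n \<in> sets lebesgue \<and> E n \<subseteq> \<Omega>) \<and>
    (AE x in lebesgue. x \<in> \<Omega> \<longrightarrow> (\<lambda>n. indicator (E n) x :: real) \<longlonglongrightarrow> 0)"
  then have E: "\<And>n. E n \<in> sets lebesgue" "\<And>n. E n \<subseteq> \<Omega>"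
    and lim: "AE x in lebesgue. x \<in> \<Omega> \<longrightarrow> (\<lambda>n. indicator (E n) x :: real) \<longlonglongrightarrow> 0"
    by auto
  have \<Omega>: "\<Omega> \<in> lmeasurable"
    using assms(1,2) by (simp add: bounded_set_imp_lmeasurable borel_open)
  have "(\<lambda>n. measure lebesgue (E n)) \<longlonglongrightarrow> 0"
    by (rule measure_tendsto_0_if_AE_indicator_tendsto_0[OF \<Omega> E lim])
  then have normE: "(\<lambda>n. var_norm_inf \<Omega> (conj_ratio_exp p q) (indicator (E n))) \<longlonglongrightarrow> 0"
    using assms(6) E by blast
  have pqP: "\<forall>x\<in>\<Omega>. 1 \<le> q x \<and> q x \<le> p x \<and> p x \<le> max 0 p_plus"
    using assms(5) by auto
  show "(\<lambda>n. SUP u \<in> {u \<in> var_Lp \<Omega> p. var_norm \<Omega> p u \<le> 1}.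
      var_norm \<Omega> q (\<lambda>x. u x * indicator (E n) x)) \<longlonglongrightarrow> 0"
    by (rule SUP_var_norm_mult_indicator_tendsto_0[OF fmeasurableD[OF \<Omega>] assms(3,4) pqP _ E normE]) simp
qed

end
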